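(* Let $P$ be a probability distribution on a finite alphabet $\mathcal A=\{a_1,a_2,\dots,a_{|\mathcal A|}\}$ (with $a_1\neq a_2$), and suppose that for some integer $s\ge1$ and some constant $\delta_0\in(0,1)$, $$\frac{3}{s\delta_0}<\min\{P(a_1),P(a_2)\}.$$ Let $\hat P$ be an empirical type over $\mathcal A^s$ such that $\min\Big\{\frac{\hat P(a_1)}{P(a_1)},\frac{P(a_2)}{\hat P(a_2)}\Big\}\ge\delta_0$ and $\hat P(a_2)\ge 1/s$. Define $\bar P$ by $\bar P(a_1)=\hat P(a_1)-\frac3s$, $\bar P(a_2)=\hat P(a_2)+\frac3s$, and $\bar P(a_i)=\hat P(a_i)$ for all $a_i\in\mathcal A\setminus\{a_1,a_2\}$. Then $$P^s(T(\bar P))\ge\delta\,P^s(T(\hat P))$$ for some strictly positive constant $\delta=\delta(\delta_0)$ depending only on $\delta_0$.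
   Context: An empirical type over $\mathcal A^s$ is a distribution $\hat P$ on $\mathcal A$ such that $\hat P(a)$ is an integer multiple of $1/s$ for every $a\in\mathcal A$. $P^s$ denotes the product distribution induced by $P$ on $\mathcal A^s$, and $T(\hat P)$ (resp. $T(\bar P)$) denotes the set of sequences in $\mathcal A^s$ whose empirical distribution equals $\hat P$ (resp. $\bar P$). *)

theory Defs
  imports Main Complex_Main
begin

definition prob_dist :: "'a set \<Rightarrow> ('a \<Rightarrow> real) \<Rightarrow> bool" where
  "prob_dist A P \<longleftrightarrow> (\<forall>a\<in>A. 0 \<le> P a) \<and> (\<Sum>a\<in>A. P a) = 1"

definition empirical_type :: "'a set \<Rightarrow> nat \<Rightarrow> ('a \<Rightarrow> real) \<Rightarrow> bool" where
  "empirical_type A s Q \<longleftrightarrow> prob_dist A Q \<and> (\<forall>a\<in>A. \<exists>k::nat. Q a = real k / real s)"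

definition typ_class :: "'a set \<Rightarrow> nat \<Rightarrow> ('a \<Rightarrow> real) \<Rightarrow> 'a list set" where
  "typ_class A s Q = {xs. set xs \<subseteq> A \<and> length xs = s \<and>
      (\<forall>a\<in>A. real (count_list xs a) / real s = Q a)}"

definition type_prob :: "'a set \<Rightarrow> ('a \<Rightarrow> real) \<Rightarrow> nat \<Rightarrow> ('a \<Rightarrow> real) \<Rightarrow> real" where
  "type_prob A P s Q = (\<Sum>xs\<in>typ_class A s Q. prod_list (map P xs))"

end

theory Submission
  imports Defs
begin

text \<open>
  All sequences of a type class have the same probability, so only the sizes of the classes
  need comparing. Overwriting one occurrence of \<open>a\<^sub>1\<close> by \<open>a\<^sub>2\<close> matches the pairs
  (sequence, position of an \<open>a\<^sub>1\<close>) with the pairs (sequence, position of an \<open>a\<^sub>2\<close>),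
  whence \<open>|T(c)| k\<^sub>1 = |T(c')| (k\<^sub>2 + 1)\<close> for the counts \<open>k\<^sub>i = s Phat(a\<^sub>i)\<close>.
  Three such moves show that the probability of the class grows by the factor
  \<open>(P(a\<^sub>2) / P(a\<^sub>1))\<^sup>3 k\<^sub>1 (k\<^sub>1 - 1) (k\<^sub>1 - 2) / ((k\<^sub>2 + 1) (k\<^sub>2 + 2) (k\<^sub>2 + 3))\<close>,
  and the hypotheses \<open>k\<^sub>1 \<ge> s \<delta>\<^sub>0 P(a\<^sub>1) > 3\<close> and \<open>1 \<le> k\<^sub>2 \<le> s P(a\<^sub>2) / \<delta>\<^sub>0\<close>
  bound this factor below by \<open>3 \<delta>\<^sub>0\<^sup>6 / 512\<close>.
\<close>

lemma count_list_list_update: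
  "i < length xs \<Longrightarrow> count_list (xs[i := b]) a =
     count_list xs a - (if xs ! i = a then 1 else 0) + (if b = a then 1 else 0)"
proof (induction xs arbitrary: i)
  case Nil
  then show ?case by simp
next
  case (Cons x xs)
  show ?case
  proof (cases i)
    case 0
    then show ?thesis by auto
  next
    case (Suc j)
    then have "0 < count_list xs (xs ! j)"
      using Cons.prems count_list_0_iff[of xs "xs ! j"] by auto
    then show ?thesis using Cons Suc by auto
  qed
qed

lemma card_positions_eq_count_list: "card {i. i < length xs \<and> xs ! i = a} = count_list xs a"
  by (simp add: count_list_eq_length_filter length_filter_conv_card eq_commute)

text \<open>The type class \<open>T(Q)\<close> described by the occurrence counts \<open>c = s Q\<close>.\<close>
definition count_class :: "'a set \<Rightarrow> nat \<Rightarrow> ('a \<Rightarrow> nat) \<Rightarrow> 'a list set" where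
  "count_class A s c = {xs. set xs \<subseteq> A \<and> length xs = s \<and> (\<forall>a\<in>A. count_list xs a = c a)}"

lemma finite_count_class: "finite A \<Longrightarrow> finite (count_class A s c)"
  unfolding count_class_def by (rule finite_subset[OF _ finite_lists_length_eq[of A s]]) auto

lemma card_count_class_positions:
  assumes "finite A" "a \<in> A"
  shows "card (SIGMA xs:count_class A s c. {i. i < length xs \<and> xs ! i = a})
           = card (count_class A s c) * c a"
proof -
  have "card (SIGMA xs:count_class A s c. {i. i < length xs \<and> xs ! i = a})
          = (\<Sum>xs\<in>count_class A s c. card {i. i < length xs \<and> xs ! i = a})"
    by (rule card_SigmaI) (auto simp: finite_count_class assms(1))
  also have "\<dots> = (\<Sum>xs\<in>count_class A s c. c a)"
    by (rule sum.cong) (auto simp: card_positions_eq_count_list count_class_def assms(2))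
  finally show ?thesis by simp
qed

lemma list_update_mem_count_class:
  assumes "xs \<in> count_class A s c" "i < length xs" "xs ! i = a" "b \<in> A" "a \<noteq> b"
  shows "xs[i := b] \<in> count_class A s (c(a := c a - 1, b := c b + 1))"
  using assms set_update_subset_insert[of xs i b]
  by (auto simp: count_class_def count_list_list_update)

lemma card_count_class_move_one:
  assumes "finite A" "a \<in> A" "b \<in> A" "a \<noteq> b" "1 \<le> c a"
  defines "c' \<equiv> c(a := c a - 1, b := c b + 1)"
  shows "card (count_class A s c) * c a = card (count_class A s c') * (c b + 1)"
proof -
  have c: "c = c'(b := c' b - 1, a := c' a + 1)"
    using assms(4,5) by (auto simp: c'_def)
  let ?S = "SIGMA xs:count_class A s c. {i. i < length xs \<and> xs ! i = a}"
  let ?S' = "SIGMA xs:count_class A s c'. {i. i < length xs \<and> xs ! i = b}"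
  have "bij_betw (\<lambda>(xs, i). (xs[i := b], i)) ?S ?S'"
  proof (rule bij_betw_byWitness[where f' = "\<lambda>(xs, i). (xs[i := a], i)"])
    show "(\<lambda>(xs, i). (xs[i := b], i)) ` ?S \<subseteq> ?S'"
      using list_update_mem_count_class[of _ A s c _ a b] assms(3,4) by (auto simp: c'_def)
    show "(\<lambda>(xs, i). (xs[i := a], i)) ` ?S' \<subseteq> ?S"
      using list_update_mem_count_class[of _ A s c' _ b a] assms(2,4) c by auto
  qed auto
  then have "card ?S = card ?S'" by (rule bij_betw_same_card)
  moreover have "c' b = c b + 1" using assms(4) by (simp add: c'_def)
  ultimately show ?thesis
    using card_count_class_positions[OF assms(1,2), of s c]
          card_count_class_positions[OF assms(1,3), of s c'] by simp
qed

lemma card_count_class_move: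
  assumes "finite A" "a \<in> A" "b \<in> A" "a \<noteq> b" "m \<le> c a"
  shows "card (count_class A s c) * (\<Prod>j<m. c a - j)
           = card (count_class A s (c(a := c a - m, b := c b + m))) * (\<Prod>j=1..m. c b + j)"
  using assms(5)
proof (induction m)
  case 0
  then show ?case by simp
next
  case (Suc m)
  let ?c = "c(a := c a - m, b := c b + m)"
  have "?c(a := ?c a - 1, b := ?c b + 1) = c(a := c a - Suc m, b := c b + Suc m)"
    using assms(4) by (auto simp: fun_eq_iff)
  then have step: "card (count_class A s ?c) * (c a - m)
               = card (count_class A s (c(a := c a - Suc m, b := c b + Suc m))) * (c b + Suc m)"
    using card_count_class_move_one[OF assms(1-4), of ?c s] assms(4) Suc.prems by simp
  have "card (count_class A s c) * (\<Prod>j<Suc m. c a - j)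
          = card (count_class A s c) * (\<Prod>j<m. c a - j) * (c a - m)"
    by (simp add: mult.assoc)
  also have "\<dots> = card (count_class A s ?c) * (c a - m) * (\<Prod>j=1..m. c b + j)"
    unfolding Suc.IH[OF Suc_leD[OF Suc.prems]] by (simp only: mult_ac)
  also have "\<dots> = card (count_class A s (c(a := c a - Suc m, b := c b + Suc m)))
                      * (\<Prod>j=1..Suc m. c b + j)"
    unfolding step by (simp add: algebra_simps)
  finally show ?case .
qed

lemma type_prob_nonneg: "\<forall>a\<in>A. 0 \<le> P a \<Longrightarrow> 0 \<le> type_prob A P s Q"
  unfolding type_prob_def typ_class_def by (intro sum_nonneg prod_list_nonneg) auto

lemma prod_list_map_eq_prod_power_count:
  fixes P :: "'a \<Rightarrow> 'b::comm_monoid_mult"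
  assumes "finite A" "set xs \<subseteq> A"
  shows "prod_list (map P xs) = (\<Prod>a\<in>A. P a ^ count_list xs a)"
  using assms(2)
proof (induction xs)
  case Nil
  then show ?case by simp
next
  case (Cons x xs)
  have "(\<Prod>a\<in>A. P a ^ count_list (x # xs) a)
          = (\<Prod>a\<in>A. (if a = x then P a else 1) * P a ^ count_list xs a)"
    by (rule prod.cong) auto
  also have "\<dots> = P x * (\<Prod>a\<in>A. P a ^ count_list xs a)"
    using Cons.prems assms(1) by (simp add: prod.distrib prod.delta)
  finally show ?case using Cons by simp
qed

lemma typ_class_eq_count_class:
  assumes "1 \<le> s" "\<forall>a\<in>A. Q a = real (c a) / real s"
  shows "typ_class A s Q = count_class A s c"
proof -
  have "real (count_list xs a) / real s = Q a \<longleftrightarrow> count_list xs a = c a" if "a \<in> A" for xs a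
    using assms that by (simp add: divide_cancel_right)
  then show ?thesis
    unfolding typ_class_def count_class_def by blast
qed

lemma type_prob_eq_count_class:
  fixes P :: "'a \<Rightarrow> real"
  assumes "finite A" "1 \<le> s" "\<forall>a\<in>A. Q a = real (c a) / real s"
  shows "type_prob A P s Q = real (card (count_class A s c)) * (\<Prod>a\<in>A. P a ^ c a)"
proof -
  have "type_prob A P s Q = (\<Sum>xs\<in>count_class A s c. \<Prod>a\<in>A. P a ^ c a)"
    unfolding type_prob_def typ_class_eq_count_class[OF assms(2,3)]
    by (rule sum.cong) (auto simp: count_class_def prod_list_map_eq_prod_power_count[OF assms(1)])
  then show ?thesis by simp
qed

lemma prod_power_move:
  fixes P :: "'a \<Rightarrow> 'b::comm_monoid_mult"
  assumes "finite A" "a \<in> A" "b \<in> A" "a \<noteq> b" "m \<le> c a"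
  shows "(\<Prod>x\<in>A. P x ^ (c(a := c a - m, b := c b + m)) x) * P a ^ m
           = (\<Prod>x\<in>A. P x ^ c x) * P b ^ m"
proof -
  have "P x ^ (c(a := c a - m, b := c b + m)) x * (if x = a then P a ^ m else 1)
          = P x ^ c x * (if x = b then P b ^ m else 1)" for x
    using assms(4,5) by (auto simp: power_add[symmetric])
  then have "(\<Prod>x\<in>A. P x ^ (c(a := c a - m, b := c b + m)) x * (if x = a then P a ^ m else 1))
               = (\<Prod>x\<in>A. P x ^ c x * (if x = b then P b ^ m else 1))"
    by simp
  then show ?thesis
    using assms(1-3) by (simp add: prod.distrib)
qed

lemma type_prob_move:
  assumes "finite A" "a \<in> A" "b \<in> A" "a \<noteq> b" "1 \<le> s"
    and Q: "\<forall>x\<in>A. Q x = real (c x) / real s" and "m \<le> c a"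
  shows "type_prob A P s (Q(a := Q a - m / s, b := Q b + m / s)) * (P a ^ m * (\<Prod>j=1..m. real (c b + j)))
           = type_prob A P s Q * (P b ^ m * (\<Prod>j<m. real (c a - j)))"
proof -
  define c' where "c' = c(a := c a - m, b := c b + m)"
  have "\<forall>x\<in>A. (Q(a := Q a - m / s, b := Q b + m / s)) x = real (c' x) / real s"
    using Q assms(2-4,7) by (auto simp: c'_def diff_divide_distrib add_divide_distrib)
  then have T': "type_prob A P s (Q(a := Q a - m / s, b := Q b + m / s))
                   = real (card (count_class A s c')) * (\<Prod>x\<in>A. P x ^ c' x)"
    by (rule type_prob_eq_count_class[OF assms(1,5)])
  have card: "real (card (count_class A s c')) * (\<Prod>j=1..m. real (c b + j))
                = real (card (count_class A s c)) * (\<Prod>j<m. real (c a - j))"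
    using arg_cong[OF card_count_class_move[where m = m and c = c and s = s, OF assms(1-4,7)], of real]
    by (simp add: c'_def)
  have "type_prob A P s (Q(a := Q a - m / s, b := Q b + m / s)) * (P a ^ m * (\<Prod>j=1..m. real (c b + j)))
          = (real (card (count_class A s c')) * (\<Prod>j=1..m. real (c b + j)))
            * ((\<Prod>x\<in>A. P x ^ c' x) * P a ^ m)"
    unfolding T' by (simp only: mult_ac)
  also have "\<dots> = (real (card (count_class A s c)) * (\<Prod>j<m. real (c a - j)))
                    * ((\<Prod>x\<in>A. P x ^ c x) * P b ^ m)"
    unfolding card by (simp only: c'_def prod_power_move[where m = m and c = c, OF assms(1-4,7)])
  also have "\<dots> = type_prob A P s Q * (P b ^ m * (\<Prod>j<m. real (c a - j)))"
    unfolding type_prob_eq_count_class[OF assms(1,5) Q] by (simp only: mult_ac)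
  finally show ?thesis .
qed

lemma empirical_type_counts:
  assumes "empirical_type A s Q"
  obtains c where "\<forall>a\<in>A. Q a = real (c a) / real s"
proof -
  have "\<forall>a\<in>A. \<exists>k. Q a = real k / real s"
    using assms by (simp add: empirical_type_def)
  from bchoice[OF this] show thesis
    using that by blast
qed

lemma falling_rising_product_bound:
  fixes k1 k2 :: nat and \<sigma> \<delta> p1 p2 :: real
  assumes k1: "4 \<le> k1" and k2: "1 \<le> k2" and pos: "0 < \<delta>" "0 < p1" "0 < p2" "0 < \<sigma>"
    and lower: "\<sigma> * \<delta> * p1 \<le> k1" and upper: "k2 \<le> \<sigma> * p2 / \<delta>"
  shows "3 * \<delta>^6 / 512 * (p1^3 * (\<Prod>j=1..3. real (k2 + j))) \<le> p2^3 * (\<Prod>j<3. real (k1 - j))"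
proof -
  define x where "x = real k1"
  define y where "y = real k2"
  have x4: "4 \<le> x" and y1: "1 \<le> y" using k1 k2 by (simp_all add: x_def y_def)
  have falling: "(\<Prod>j<3. real (k1 - j)) = x * (x - 1) * (x - 2)"
    using k1 by (simp add: numeral_3_eq_3 x_def)
  have rising: "(\<Prod>j=1..3. real (k2 + j)) = (y + 1) * (y + 2) * (y + 3)"
    by (simp add: numeral_3_eq_3 y_def)
  have "3/8 * x^3 \<le> x * (x - 1) * (x - 2)"
  proof -
    have "x * (x - 1) * (x - 2) - 3/8 * x^3 = x * ((5 * x - 4) * (x - 4)) / 8"
      by (simp add: algebra_simps power3_eq_cube)
    moreover have "0 \<le> x * ((5 * x - 4) * (x - 4))" using x4 by simp
    ultimately show ?thesis by linarith
  qed
  have "(y + 1) * (y + 2) * (y + 3) \<le> (4 * y) * (4 * y) * (4 * y)"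
    using y1 by (intro mult_mono) auto
  then have "(y + 1) * (y + 2) * (y + 3) \<le> 64 * (\<sigma> * p2 / \<delta>)^3"
    using power_mono[OF upper, of 3] y1 by (simp add: y_def power3_eq_cube)
  then have "3 * \<delta>^6 / 512 * (p1^3 * ((y + 1) * (y + 2) * (y + 3)))
               \<le> 3 * \<delta>^6 / 512 * (p1^3 * (64 * (\<sigma> * p2 / \<delta>)^3))"
    using pos by (intro mult_left_mono) auto
  also have "\<dots> = 3/8 * (\<sigma> * \<delta> * p1)^3 * p2^3"
    using pos by (simp add: field_simps power3_eq_cube eval_nat_numeral)
  also have "\<dots> \<le> 3/8 * x^3 * p2^3"
    using power_mono[OF lower, of 3] pos by (simp add: x_def)
  also have "\<dots> \<le> p2^3 * (x * (x - 1) * (x - 2))"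
    using \<open>3/8 * x^3 \<le> x * (x - 1) * (x - 2)\<close> pos by (simp add: mult.commute)
  finally show ?thesis unfolding falling rising .
qed

lemma type_prob_move_three_ge:
  fixes P :: "'a \<Rightarrow> real"
  assumes "finite A" "a \<in> A" "b \<in> A" "a \<noteq> b" "1 \<le> s"
    and Q: "\<forall>x\<in>A. Q x = real (c x) / real s" and P: "\<forall>x\<in>A. 0 \<le> P x"
    and pos: "0 < \<delta>" "0 < P a" "0 < P b" and counts: "4 \<le> c a" "1 \<le> c b"
    and lower: "real s * \<delta> * P a \<le> c a" and upper: "c b \<le> real s * P b / \<delta>"
  shows "3 * \<delta>^6 / 512 * type_prob A P s Q
           \<le> type_prob A P s (Q(a := Q a - 3 / real s, b := Q b + 3 / real s))"
proof -
  have s_pos: "0 < real s" using assms(5) by simp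
  have D_pos: "0 < P a ^ 3 * (\<Prod>j=1..3. real (c b + j))"
    using pos by (intro mult_pos_pos zero_less_power prod_pos) auto
  have "3 * \<delta>^6 / 512 * type_prob A P s Q * (P a ^ 3 * (\<Prod>j=1..3. real (c b + j)))
          \<le> type_prob A P s Q * (P b ^ 3 * (\<Prod>j<3. real (c a - j)))"
    using mult_left_mono[OF falling_rising_product_bound[OF counts pos s_pos lower upper]
                            type_prob_nonneg[OF P]]
    by (simp add: ac_simps)
  also have "\<dots> = type_prob A P s (Q(a := Q a - 3 / real s, b := Q b + 3 / real s))
                    * (P a ^ 3 * (\<Prod>j=1..3. real (c b + j)))"
    using type_prob_move[OF assms(1-5) Q, of 3 P] counts by simp
  finally show ?thesis
    using D_pos by (rule mult_right_le_imp_le)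
qed

theorem lemma1:
  fixes \<delta>\<^sub>0 :: real
  assumes "0 < \<delta>\<^sub>0" and "\<delta>\<^sub>0 < 1"
  shows "\<exists>\<delta>>0. \<forall>(A::nat set) (P::nat \<Rightarrow> real) (s::nat) (Phat::nat \<Rightarrow> real) a1 a2.
     finite A \<longrightarrow> a1 \<in> A \<longrightarrow> a2 \<in> A \<longrightarrow> a1 \<noteq> a2 \<longrightarrow> prob_dist A P \<longrightarrow> s \<ge> 1 \<longrightarrow>
     3 / (real s * \<delta>\<^sub>0) < min (P a1) (P a2) \<longrightarrow>
     empirical_type A s Phat \<longrightarrow>
     min (Phat a1 / P a1) (P a2 / Phat a2) \<ge> \<delta>\<^sub>0 \<longrightarrow>
     Phat a2 \<ge> 1 / real s \<longrightarrow>
     type_prob A P s (Phat(a1 := Phat a1 - 3 / real s, a2 := Phat a2 + 3 / real s))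
       \<ge> \<delta> * type_prob A P s Phat"
proof (intro exI[of _ "3 * \<delta>\<^sub>0^6 / 512"] conjI allI impI)
  show "0 < 3 * \<delta>\<^sub>0^6 / 512" using assms by simp
  fix A :: "nat set" and P :: "nat \<Rightarrow> real" and s :: nat and Phat :: "nat \<Rightarrow> real" and a1 a2
  assume fin: "finite A" and a1: "a1 \<in> A" and a2: "a2 \<in> A" and ne: "a1 \<noteq> a2"
    and P: "prob_dist A P" and s: "s \<ge> 1"
    and P_large: "3 / (real s * \<delta>\<^sub>0) < min (P a1) (P a2)"
    and Phat: "empirical_type A s Phat"
    and ratio: "min (Phat a1 / P a1) (P a2 / Phat a2) \<ge> \<delta>\<^sub>0"
    and Phat_a2: "Phat a2 \<ge> 1 / real s"
  obtain c where c: "\<forall>a\<in>A. Phat a = real (c a) / real s"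
    using empirical_type_counts[OF Phat] .
  have s_pos: "0 < real s" using s by simp
  have "0 < 3 / (real s * \<delta>\<^sub>0)" using s_pos assms by simp
  moreover have "3 / (real s * \<delta>\<^sub>0) < P a1" "3 / (real s * \<delta>\<^sub>0) < P a2"
    using P_large by auto
  ultimately have P_pos: "0 < P a1" "0 < P a2" by linarith+
  have lower: "real s * \<delta>\<^sub>0 * P a1 \<le> c a1"
    using ratio c a1 P_pos s_pos by (simp add: field_simps)
  moreover have "3 < real s * \<delta>\<^sub>0 * P a1"
    using P_large s_pos assms by (simp add: field_simps)
  ultimately have "3 < real (c a1)" by linarith
  then have c_a1: "4 \<le> c a1" by simp
  have c_a2: "1 \<le> c a2"
    using Phat_a2 c a2 s_pos by (simp add: divide_le_cancel)
  have upper: "c a2 \<le> real s * P a2 / \<delta>\<^sub>0"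
    using ratio c a2 c_a2 s_pos assms by (simp add: field_simps)
  show "3 * \<delta>\<^sub>0^6 / 512 * type_prob A P s Phat
      \<le> type_prob A P s (Phat(a1 := Phat a1 - 3 / real s, a2 := Phat a2 + 3 / real s))"
    using P unfolding prob_dist_def
    by (intro type_prob_move_three_ge[OF fin a1 a2 ne s c _ assms(1) P_pos c_a1 c_a2 lower upper]) auto
qed

end
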